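(* Let $\mathcal X,\mathcal U$ be finite nonempty sets, $f:\mathcal X\times\mathcal U\to\mathcal X$ and $\ell_1,\ell_2:\mathcal X\to\mathbb R$, and let $$v_{\mathrm{RR}}^*(x)=\max_{\mathbf u\in\mathbb U}\min\Big\{\max_{\tau\in\mathbb N}\ell_1(\xi_x^{\mathbf u}(\tau)),\max_{\tau\in\mathbb N}\ell_2(\xi_x^{\mathbf u}(\tau))\Big\}.$$ Then there is an augmented policy $\bar\pi\in\overline\Pi$ such that for all $x\in\mathcal X$, $$v_{\mathrm{RR}}^*(x)=\min\Big\{\max_{\tau\in\mathbb N}\ell_1(\bar\xi_x^{\bar\pi}(\tau)),\max_{\tau\in\mathbb N}\ell_2(\bar\xi_x^{\bar\pi}(\tau))\Big\}.$$
   Context: $\mathbb N=\{0,1,\dots\}$; $\mathbb U$ is the set of sequences $\mathbb N\to\mathcal U$; for $\mathbf u\in\mathbb U$: $\xi_x^{\mathbf u}(0)=x$, $\xi_x^{\mathbf u}(t+1)=f(\xi_x^{\mathbf u}(t),\mathbf u(t))$. Let $\mathcal Y=\{\ell_1(x):x\in\mathcal X\}$, $\mathcal Z=\{\ell_2(x):x\in\mathcal X\}$ and $\overline\Pi$ the set of maps $\bar\pi:\mathcal X\times\mathcal Y\times\mathcal Z\to\mathcal U$. For $\bar\pi\in\overline\Pi$: $\bar\xi_x^{\bar\pi}(0)=x$, $\bar y_x^{\bar\pi}(0)=\ell_1(x)$, $\bar z_x^{\bar\pi}(0)=\ell_2(x)$, $\bar\xi_x^{\bar\pi}(t+1)=f\big(\bar\xi_x^{\bar\pi}(t),\bar\pi(\bar\xi_x^{\bar\pi}(t),\bar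 y_x^{\bar\pi}(t),\bar z_x^{\bar\pi}(t))\big)$, $\bar y_x^{\bar\pi}(t+1)=\max\{\ell_1(\bar\xi_x^{\bar\pi}(t+1)),\bar y_x^{\bar\pi}(t)\}$, $\bar z_x^{\bar\pi}(t+1)=\max\{\ell_2(\bar\xi_x^{\bar\pi}(t+1)),\bar z_x^{\bar\pi}(t)\}$. *)

theory Defs
  imports Main "HOL.Real"
begin

primrec traj :: "('x \<Rightarrow> 'u \<Rightarrow> 'x) \<Rightarrow> 'x \<Rightarrow> (nat \<Rightarrow> 'u) \<Rightarrow> nat \<Rightarrow> 'x" where
  "traj f x u 0 = x"
| "traj f x u (Suc t) = f (traj f x u t) (u t)"

primrec aug_traj :: "('x \<Rightarrow> 'u \<Rightarrow> 'x) \<Rightarrow> ('x \<Rightarrow> real) \<Rightarrow> ('x \<Rightarrow> real)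
    \<Rightarrow> ('x \<Rightarrow> real \<Rightarrow> real \<Rightarrow> 'u) \<Rightarrow> 'x \<Rightarrow> nat \<Rightarrow> 'x \<times> real \<times> real" where
  "aug_traj f l1 l2 pi x 0 = (x, l1 x, l2 x)"
| "aug_traj f l1 l2 pi x (Suc t) =
     (let (s, y, z) = aug_traj f l1 l2 pi x t;
          s' = f s (pi s y z)
      in (s', max (l1 s') y, max (l2 s') z))"

definition aug_state :: "('x \<Rightarrow> 'u \<Rightarrow> 'x) \<Rightarrow> ('x \<Rightarrow> real) \<Rightarrow> ('x \<Rightarrow> real)
    \<Rightarrow> ('x \<Rightarrow> real \<Rightarrow> real \<Rightarrow> 'u) \<Rightarrow> 'x \<Rightarrow> nat \<Rightarrow> 'x" where
  "aug_state f l1 l2 pi x t = fst (aug_traj f l1 l2 pi x t)"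

text \<open>Optimal reach-reach value: max over input sequences of the min of the two
  maxima over time. All maxima are over finite value sets since 'x is finite.\<close>
definition v_RR :: "('x \<Rightarrow> 'u \<Rightarrow> 'x) \<Rightarrow> ('x \<Rightarrow> real) \<Rightarrow> ('x \<Rightarrow> real) \<Rightarrow> 'x \<Rightarrow> real" where
  "v_RR f l1 l2 x = Max ((\<lambda>u. min (Max (range (\<lambda>\<tau>. l1 (traj f x u \<tau>))))
                                     (Max (range (\<lambda>\<tau>. l2 (traj f x u \<tau>))))) ` UNIV)"

end

theory Submission
  imports Defs
begin

text \<open>Augment the state by the running maxima y, z of l1 and l2 along the trajectory. The
  reach-reach payoff of an input sequence is then the largest value of min y z met along the
  augmented trajectory, so v_RR is the optimal value of a plain reach problem with finitely
  many reward values. Such a problem has a stationary optimal feedback: at each state apply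
  the first input of an optimal input sequence that attains the optimal value as early as
  possible. One step of this feedback preserves the optimal value and strictly decreases the
  earliest attainment time, so the closed loop attains the optimal value.\<close>

primrec closed_traj :: "('s \<Rightarrow> 'u \<Rightarrow> 's) \<Rightarrow> ('s \<Rightarrow> 'u) \<Rightarrow> 's \<Rightarrow> nat \<Rightarrow> 's" where
  "closed_traj F P s 0 = s"
| "closed_traj F P s (Suc t) = F (closed_traj F P s t) (P (closed_traj F P s t))"

lemma traj_Suc_shift: "traj F s u (Suc t) = traj F (F s (u 0)) (\<lambda>k. u (Suc k)) t"
  by (induction t) auto

lemma closed_traj_Suc_shift: "closed_traj F P s (Suc t) = closed_traj F P (F s (P s)) t"
  by (induction t) auto

lemma closed_traj_eq_traj: "closed_traj F P s t = traj F s (\<lambda>k. P (closed_traj F P s k)) t"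
  by (induction t) auto

locale reach_problem =
  fixes F :: "'s \<Rightarrow> 'u \<Rightarrow> 's" and g :: "'s \<Rightarrow> real"
  assumes finite_rewards: "finite {g (traj F s u t) | u t. True}"
begin

definition reach_value :: "'s \<Rightarrow> real" where
  "reach_value s = Max {g (traj F s u t) | u t. True}"

lemma reward_le_reach_value: "g (traj F s u t) \<le> reach_value s"
  unfolding reach_value_def by (rule Max_ge[OF finite_rewards]) blast

lemma reach_value_attained: "\<exists>u t. g (traj F s u t) = reach_value s"
proof -
  have "reach_value s \<in> {g (traj F s u t) | u t. True}"
    unfolding reach_value_def by (rule Max_in[OF finite_rewards]) blast
  then obtain u t where "reach_value s = g (traj F s u t)"
    by blast
  then show ?thesis
    by (intro exI) (rule sym)
qed

lemma reach_value_step_le: "reach_value (F s a) \<le> reach_value s"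
proof -
  obtain u t where "g (traj F (F s a) u t) = reach_value (F s a)"
    using reach_value_attained by blast
  moreover have "traj F (F s a) u t = traj F s (case_nat a u) (Suc t)"
    unfolding traj_Suc_shift by simp
  ultimately show ?thesis by (metis reward_le_reach_value)
qed

definition optimal_time :: "'s \<Rightarrow> nat" where
  "optimal_time s = (LEAST t. \<exists>u. g (traj F s u t) = reach_value s)"

definition optimal_input :: "'s \<Rightarrow> nat \<Rightarrow> 'u" where
  "optimal_input s = (SOME u. g (traj F s u (optimal_time s)) = reach_value s)"

definition optimal_policy :: "'s \<Rightarrow> 'u" where
  "optimal_policy s = optimal_input s 0"

lemma optimal_input: "g (traj F s (optimal_input s) (optimal_time s)) = reach_value s"
proof -
  have "\<exists>u. g (traj F s u (optimal_time s)) = reach_value s"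
    unfolding optimal_time_def by (rule LeastI_ex) (use reach_value_attained in blast)
  then show ?thesis
    unfolding optimal_input_def by (rule someI_ex)
qed

lemma optimal_time_le: "g (traj F s u t) = reach_value s \<Longrightarrow> optimal_time s \<le> t"
  unfolding optimal_time_def by (rule Least_le) blast

lemma optimal_policy_step:
  assumes "optimal_time s = Suc n"
  shows "reach_value (F s (optimal_policy s)) = reach_value s"
    and "optimal_time (F s (optimal_policy s)) \<le> n"
proof -
  define u where "u = optimal_input s"
  have attained: "g (traj F (F s (optimal_policy s)) (\<lambda>k. u (Suc k)) n) = reach_value s"
    using optimal_input[of s] by (simp only: assms traj_Suc_shift u_def optimal_policy_def)
  then have "reach_value s \<le> reach_value (F s (optimal_policy s))"
    by (metis reward_le_reach_value)
  with reach_value_step_le show value_eq: "reach_value (F s (optimal_policy s)) = reach_value s"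
    by (rule antisym)
  show "optimal_time (F s (optimal_policy s)) \<le> n"
    using attained unfolding value_eq[symmetric] by (rule optimal_time_le)
qed

theorem closed_traj_optimal_policy: "\<exists>t. g (closed_traj F optimal_policy s t) = reach_value s"
proof (induction "optimal_time s" arbitrary: s rule: less_induct)
  case less
  show ?case
  proof (cases "optimal_time s")
    case 0
    then have "g (closed_traj F optimal_policy s 0) = reach_value s"
      using optimal_input[of s] by simp
    then show ?thesis ..
  next
    case (Suc n)
    let ?s1 = "F s (optimal_policy s)"
    have "optimal_time ?s1 < optimal_time s"
      using optimal_policy_step(2)[OF Suc] Suc by simp
    then obtain t where "g (closed_traj F optimal_policy ?s1 t) = reach_value ?s1"
      using less by blast
    then have "g (closed_traj F optimal_policy s (Suc t)) = reach_value s"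
      by (simp only: closed_traj_Suc_shift optimal_policy_step(1)[OF Suc])
    then show ?thesis ..
  qed
qed

end

fun aug_step :: "('x \<Rightarrow> 'u \<Rightarrow> 'x) \<Rightarrow> ('x \<Rightarrow> real) \<Rightarrow> ('x \<Rightarrow> real)
    \<Rightarrow> 'x \<times> real \<times> real \<Rightarrow> 'u \<Rightarrow> 'x \<times> real \<times> real" where
  "aug_step f l1 l2 (x, y, z) a = (f x a, max (l1 (f x a)) y, max (l2 (f x a)) z)"

fun aug_reward :: "'x \<times> real \<times> real \<Rightarrow> real" where
  "aug_reward (x, y, z) = min y z"

lemma aug_traj_eq_closed_traj:
  "aug_traj f l1 l2 pi x t =
     closed_traj (aug_step f l1 l2) (\<lambda>(s, y, z). pi s y z) (x, l1 x, l2 x) t"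
  by (induction t) (auto simp: Let_def split: prod.splits)

lemma traj_aug_step_mem:
  "traj (aug_step f l1 l2) (x, y, z) u t \<in> UNIV \<times> insert y (range l1) \<times> insert z (range l2)"
proof (induction t)
  case (Suc t)
  obtain x' y' z' where "traj (aug_step f l1 l2) (x, y, z) u t = (x', y', z')"
    by (metis prod.exhaust)
  with Suc show ?case
    by (auto simp: max_def)
qed simp

lemma reach_problem_aug_step:
  fixes l1 l2 :: "'x::finite \<Rightarrow> real"
  shows "reach_problem (aug_step f l1 l2) aug_reward"
proof
  fix s :: "'x \<times> real \<times> real"
  obtain x y z where s: "s = (x, y, z)"
    by (cases s) blast
  have "aug_reward (traj (aug_step f l1 l2) s u t)
          \<in> insert y (range l1) \<union> insert z (range l2)" for u t
  proof -
    obtain x' y' z' where "traj (aug_step f l1 l2) s u t = (x', y', z')"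
      by (metis prod.exhaust)
    then show ?thesis
      using traj_aug_step_mem[of f l1 l2 x y z u t] by (auto simp: s min_def)
  qed
  then have "{aug_reward (traj (aug_step f l1 l2) s u t) | u t. True}
          \<subseteq> insert y (range l1) \<union> insert z (range l2)"
    by blast
  then show "finite {aug_reward (traj (aug_step f l1 l2) s u t) | u t. True}"
    by (rule finite_subset) simp
qed

lemma traj_aug_step:
  "traj (aug_step f l1 l2) (x, l1 x, l2 x) u t =
     (traj f x u t, Max ((\<lambda>\<tau>. l1 (traj f x u \<tau>)) ` {..t}),
      Max ((\<lambda>\<tau>. l2 (traj f x u \<tau>)) ` {..t}))"
  by (induction t) (simp_all add: atMost_Suc)

lemma Max_atMost_eq_Max_range:
  fixes a :: "nat \<Rightarrow> 'a::linorder"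
  assumes "finite (range a)" and "T \<le> t" and "Max (range a) = a T"
  shows "Max (a ` {..t}) = Max (range a)"
proof (rule antisym)
  show "Max (a ` {..t}) \<le> Max (range a)"
    by (rule Max_mono) (auto simp: assms(1))
  show "Max (range a) \<le> Max (a ` {..t})"
    unfolding assms(3) using assms(2) by (intro Max_ge) auto
qed

definition rr_payoff :: "('x \<Rightarrow> 'u \<Rightarrow> 'x) \<Rightarrow> ('x \<Rightarrow> real) \<Rightarrow> ('x \<Rightarrow> real)
    \<Rightarrow> 'x \<Rightarrow> (nat \<Rightarrow> 'u) \<Rightarrow> real" where
  "rr_payoff f l1 l2 x u =
     min (Max (range (\<lambda>\<tau>. l1 (traj f x u \<tau>)))) (Max (range (\<lambda>\<tau>. l2 (traj f x u \<tau>))))"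

lemma finite_range_comp_traj:
  fixes l :: "'x::finite \<Rightarrow> real"
  shows "finite (range (\<lambda>\<tau>. l (traj f x u \<tau>)))"
  by (simp add: finite_range_imageI)

lemma aug_reward_le_rr_payoff:
  fixes f :: "'x::finite \<Rightarrow> 'u \<Rightarrow> 'x"
  shows "aug_reward (traj (aug_step f l1 l2) (x, l1 x, l2 x) u t) \<le> rr_payoff f l1 l2 x u"
  unfolding traj_aug_step rr_payoff_def aug_reward.simps
  by (intro min.mono Max_mono image_mono) (simp_all add: finite_range_comp_traj)

lemma rr_payoff_attained:
  fixes f :: "'x::finite \<Rightarrow> 'u \<Rightarrow> 'x"
  shows "\<exists>t. rr_payoff f l1 l2 x u = aug_reward (traj (aug_step f l1 l2) (x, l1 x, l2 x) u t)"
proof -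
  obtain t1 where t1: "Max (range (\<lambda>\<tau>. l1 (traj f x u \<tau>))) = l1 (traj f x u t1)"
    using Max_in[OF finite_range_comp_traj, of l1 f x u] by auto
  obtain t2 where t2: "Max (range (\<lambda>\<tau>. l2 (traj f x u \<tau>))) = l2 (traj f x u t2)"
    using Max_in[OF finite_range_comp_traj, of l2 f x u] by auto
  have "rr_payoff f l1 l2 x u = aug_reward (traj (aug_step f l1 l2) (x, l1 x, l2 x) u (max t1 t2))"
    unfolding traj_aug_step rr_payoff_def aug_reward.simps
    using Max_atMost_eq_Max_range[OF finite_range_comp_traj _ t1]
          Max_atMost_eq_Max_range[OF finite_range_comp_traj _ t2] by simp
  then show ?thesis ..
qed

lemma v_RR_eq_reach_value:
  fixes f :: "'x::finite \<Rightarrow> 'u \<Rightarrow> 'x"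
  shows "v_RR f l1 l2 x = reach_problem.reach_value (aug_step f l1 l2) aug_reward (x, l1 x, l2 x)"
proof -
  interpret reach_problem "aug_step f l1 l2" aug_reward
    by (rule reach_problem_aug_step)
  have "range (rr_payoff f l1 l2 x) \<subseteq>
          {aug_reward (traj (aug_step f l1 l2) (x, l1 x, l2 x) u t) | u t. True}"
    using rr_payoff_attained[of f l1 l2 x] by blast
  then have finite_payoffs: "finite (range (rr_payoff f l1 l2 x))"
    using finite_rewards by (rule finite_subset)
  have v_RR_eq: "v_RR f l1 l2 x = Max (range (rr_payoff f l1 l2 x))"
    unfolding v_RR_def rr_payoff_def ..
  show ?thesis
  proof (rule antisym)
    obtain u where "v_RR f l1 l2 x = rr_payoff f l1 l2 x u"
      using Max_in[OF finite_payoffs] unfolding v_RR_eq by auto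
    moreover obtain t where
      "rr_payoff f l1 l2 x u = aug_reward (traj (aug_step f l1 l2) (x, l1 x, l2 x) u t)"
      using rr_payoff_attained by blast
    ultimately show "v_RR f l1 l2 x \<le> reach_value (x, l1 x, l2 x)"
      using reward_le_reach_value by simp
  next
    obtain u t where
      "aug_reward (traj (aug_step f l1 l2) (x, l1 x, l2 x) u t) = reach_value (x, l1 x, l2 x)"
      using reach_value_attained by blast
    then have "reach_value (x, l1 x, l2 x) \<le> rr_payoff f l1 l2 x u"
      using aug_reward_le_rr_payoff[of f l1 l2 x u t] by simp
    also have "rr_payoff f l1 l2 x u \<le> v_RR f l1 l2 x"
      unfolding v_RR_eq using finite_payoffs by (rule Max_ge) simp
    finally show "reach_value (x, l1 x, l2 x) \<le> v_RR f l1 l2 x" .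
  qed
qed

lemma rr_payoff_eq_v_RR_if_attained:
  fixes f :: "'x::finite \<Rightarrow> 'u \<Rightarrow> 'x"
  assumes "aug_reward (traj (aug_step f l1 l2) (x, l1 x, l2 x) u t) = v_RR f l1 l2 x"
  shows "rr_payoff f l1 l2 x u = v_RR f l1 l2 x"
proof (rule antisym)
  interpret reach_problem "aug_step f l1 l2" aug_reward
    by (rule reach_problem_aug_step)
  obtain t' where
    "rr_payoff f l1 l2 x u = aug_reward (traj (aug_step f l1 l2) (x, l1 x, l2 x) u t')"
    using rr_payoff_attained by blast
  then show "rr_payoff f l1 l2 x u \<le> v_RR f l1 l2 x"
    by (simp add: v_RR_eq_reach_value reward_le_reach_value)
  show "v_RR f l1 l2 x \<le> rr_payoff f l1 l2 x u"
    using aug_reward_le_rr_payoff[of f l1 l2 x u t] assms by simp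
qed

lemma rr_payoff_optimal_policy:
  fixes f :: "'x::finite \<Rightarrow> 'u \<Rightarrow> 'x" and l1 l2 :: "'x \<Rightarrow> real"
  defines "P \<equiv> reach_problem.optimal_policy (aug_step f l1 l2) aug_reward"
  shows "rr_payoff f l1 l2 x (\<lambda>k. P (closed_traj (aug_step f l1 l2) P (x, l1 x, l2 x) k))
           = v_RR f l1 l2 x"
proof -
  interpret reach_problem "aug_step f l1 l2" aug_reward
    by (rule reach_problem_aug_step)
  obtain t where "aug_reward (closed_traj (aug_step f l1 l2) P (x, l1 x, l2 x) t)
                    = reach_value (x, l1 x, l2 x)"
    unfolding P_def using closed_traj_optimal_policy by blast
  then show ?thesis
    by (intro rr_payoff_eq_v_RR_if_attained[where t = t])
       (simp add: closed_traj_eq_traj[symmetric] v_RR_eq_reach_value)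
qed

lemma aug_state_eq_traj:
  "aug_state f l1 l2 pi x t =
     traj f x (\<lambda>k. (\<lambda>(s, y, z). pi s y z) (aug_traj f l1 l2 pi x k)) t"
proof -
  define u where "u = (\<lambda>k. (\<lambda>(s, y, z). pi s y z) (aug_traj f l1 l2 pi x k))"
  have "aug_traj f l1 l2 pi x t = traj (aug_step f l1 l2) (x, l1 x, l2 x) u t"
    unfolding u_def aug_traj_eq_closed_traj by (rule closed_traj_eq_traj)
  then show ?thesis
    unfolding aug_state_def u_def[symmetric] by (simp add: traj_aug_step)
qed

theorem mainTheorem16:
  fixes f :: "'x::finite \<Rightarrow> 'u::finite \<Rightarrow> 'x"
    and l1 l2 :: "'x \<Rightarrow> real"
  shows "\<exists>pi :: 'x \<Rightarrow> real \<Rightarrow> real \<Rightarrow> 'u. \<forall>x.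
           v_RR f l1 l2 x =
             min (Max (range (\<lambda>\<tau>. l1 (aug_state f l1 l2 pi x \<tau>))))
                 (Max (range (\<lambda>\<tau>. l2 (aug_state f l1 l2 pi x \<tau>))))"
proof -
  define P where "P = reach_problem.optimal_policy (aug_step f l1 l2) aug_reward"
  define pi where "pi x y z = P (x, y, z)" for x y z
  have policy: "(\<lambda>(s, y, z). pi s y z) = P"
    by (auto simp: pi_def)
  have "v_RR f l1 l2 x =
          min (Max (range (\<lambda>\<tau>. l1 (aug_state f l1 l2 pi x \<tau>))))
              (Max (range (\<lambda>\<tau>. l2 (aug_state f l1 l2 pi x \<tau>))))" for x
    using rr_payoff_optimal_policy[of f l1 l2 x, folded P_def]
    unfolding aug_state_eq_traj aug_traj_eq_closed_traj policy rr_payoff_def by simp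
  then show ?thesis
    by blast
qed

end
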